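(* Let $n$ be a square-free integer with $n\neq 1$ and let $\lambda\geq 3$ be an integer. For integers $s$ with $(s-1)^2>n$ put $\alpha_s=(s^2-s-n,\ (s-1)^2-n,\ s^2-n)\in A(n)$. Then there is $s_0$ such that for all integers $s>t\geq s_0$, the elements $\alpha_s$ and $\alpha_t$ lie in different $H(\lambda)$-orbits of $A(n)$; in fact every element $(a',b',c')$ of the $H(\lambda)$-orbit of $\alpha_s$ satisfies $|a'|\geq s^2-s-n$.
   Context: $A(n)=\{(a,b,c)\in\mathbb{Z}^3: bc=a^2-n\}$, in bijection with $\mathbb{Q}^*(\sqrt n)=\{\frac{a+\sqrt n}{c}: a,c\in\mathbb Z, c\neq 0, \frac{a^2-n}{c}\in\mathbb Z\}$ via $\frac{a+\sqrt n}{c}\mapsto (a,\frac{a^2-n}{c},c)$. $H(\lambda)$ is the group generated by $x:z\mapsto -1/z$ and $w_\lambda:z\mapsto z+\lambda$, acting on triples by $x(a,b,c)=(-a,c,b)$ and $w_\lambda(a,b,c)=(a+\lambda c,\,2\lambda a+b+\lambda^2c,\,c)$. *)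

theory Defs
  imports "HOL-Computational_Algebra.Squarefree"
begin

type_synonym triple = "int \<times> int \<times> int"

definition A :: "int \<Rightarrow> triple set" where
  "A n = {(a, b, c). b * c = a^2 - n}"

text \<open>Action of the generator x : z -> -1/z.\<close>
definition xact :: "triple \<Rightarrow> triple" where
  "xact t = (case t of (a, b, c) \<Rightarrow> (-a, c, b))"

text \<open>Action of the generator w_lambda : z -> z + lambda.\<close>
definition wact :: "int \<Rightarrow> triple \<Rightarrow> triple" where
  "wact l t = (case t of (a, b, c) \<Rightarrow> (a + l * c, 2 * l * a + b + l^2 * c, c))"

definition winvact :: "int \<Rightarrow> triple \<Rightarrow> triple" where
  "winvact l t = wact (-l) t"

text \<open>The orbit of a triple under the group H(lambda) generated by x and w_lambda
  (x is an involution, so closure under x, w_lambda and w_lambda^(-1) gives the group orbit).\<close>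
inductive_set Horbit :: "int \<Rightarrow> triple \<Rightarrow> triple set" for l :: int and t0 :: triple where
  base: "t0 \<in> Horbit l t0"
| x_step: "t \<in> Horbit l t0 \<Longrightarrow> xact t \<in> Horbit l t0"
| w_step: "t \<in> Horbit l t0 \<Longrightarrow> wact l t \<in> Horbit l t0"
| winv_step: "t \<in> Horbit l t0 \<Longrightarrow> winvact l t \<in> Horbit l t0"

definition alpha :: "int \<Rightarrow> int \<Rightarrow> triple" where
  "alpha n s = (s^2 - s - n, (s - 1)^2 - n, s^2 - n)"

end

theory Submission
  imports Defs
begin

text \<open>Every point of the orbit of \<open>\<alpha>\<^sub>s\<close> is reached by a word in \<open>x, w\<^sub>\<lambda>, w\<^sub>\<lambda>\<^sup>-\<^sup>1\<close>
  that never immediately undoes its previous letter. Along such a word \<open>|a|\<close> never drops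
  below \<open>s\<^sup>2 - s - n\<close>: a shift applied to a triple with \<open>|a| < |c|\<close>, or with \<open>\<lambda>ac > 0\<close>, strictly
  increases \<open>|a|\<close> and leaves \<open>|c| < |a|\<close> and \<open>\<lambda>ac > 0\<close>; and once \<open>|c| < |a|\<close> with \<open>|a| > |n|\<close>,
  the relation \<open>bc = a\<^sup>2 - n\<close> forces \<open>|a| < |b|\<close>, so \<open>x\<close> produces \<open>|a| < |c|\<close> again.
  Since \<open>s\<^sup>2 - s - n\<close> is increasing in \<open>s\<close>, \<open>\<alpha>\<^sub>t\<close> cannot lie in the orbit of \<open>\<alpha>\<^sub>s\<close> for \<open>t < s\<close>.\<close>

lemma factor_abs_gt:
  fixes a b c n :: int
  assumes "b * c = a^2 - n" and "\<bar>c\<bar> < \<bar>a\<bar>" and "\<bar>n\<bar> < \<bar>a\<bar>"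
  shows "\<bar>a\<bar> < \<bar>b\<bar>"
proof (rule ccontr)
  assume "\<not> \<bar>a\<bar> < \<bar>b\<bar>"
  then have "\<bar>b\<bar> * \<bar>c\<bar> \<le> \<bar>a\<bar> * (\<bar>a\<bar> - 1)"
    using assms(2) by (intro mult_mono) auto
  then have "\<bar>a^2 - n\<bar> \<le> a^2 - \<bar>a\<bar>"
    using assms(1) by (simp add: abs_mult power2_eq_square algebra_simps flip: abs_mult)
  then show False using assms(3) by linarith
qed

lemma mult_add_pos_of_abs_lt:
  fixes a u :: int
  assumes "\<bar>a\<bar> < \<bar>u\<bar>"
  shows "0 < u * (a + u)"
  using assms by (auto simp: zero_less_mult_iff abs_if split: if_splits)

lemma shift_of_abs_lt:
  fixes a c k :: int
  assumes "\<bar>a\<bar> < \<bar>c\<bar>" and "3 \<le> \<bar>k\<bar>"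
  shows "\<bar>c\<bar> < \<bar>a + k * c\<bar> \<and> 0 < k * (a + k * c) * c"
proof -
  have "3 * \<bar>c\<bar> \<le> \<bar>k * c\<bar>"
    using assms(2) by (simp add: abs_mult mult_right_mono)
  moreover have "\<bar>k * c\<bar> - \<bar>a\<bar> \<le> \<bar>a + k * c\<bar>" by linarith
  moreover have "0 < (k * c) * (a + k * c)"
    using assms calculation(1) by (intro mult_add_pos_of_abs_lt) linarith
  ultimately show ?thesis using assms(1) by (simp add: algebra_simps)
qed

lemma abs_add_of_mult_pos:
  fixes a u :: int
  assumes "0 < u * a"
  shows "\<bar>a + u\<bar> = \<bar>a\<bar> + \<bar>u\<bar>"
  using assms by (auto simp: zero_less_mult_iff)

lemma shift_of_same_sign:
  fixes a c k :: int
  assumes "0 < k * a * c"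
  shows "\<bar>a\<bar> < \<bar>a + k * c\<bar> \<and> 0 < k * (a + k * c) * c"
proof -
  have ua: "0 < (k * c) * a" using assms by (simp add: ac_simps)
  then have "\<bar>a + k * c\<bar> = \<bar>a\<bar> + \<bar>k * c\<bar>" and "k * c \<noteq> 0"
    by (auto simp: abs_add_of_mult_pos)
  moreover have "0 < (k * c) * (a + k * c)"
    using ua zero_le_square[of "k * c"] unfolding distrib_left by linarith
  ultimately show ?thesis by (simp add: algebra_simps)
qed

lemma xact_in_A: "t \<in> A n \<Longrightarrow> xact t \<in> A n"
  by (cases t) (simp add: A_def xact_def mult.commute)

lemma wact_in_A: "t \<in> A n \<Longrightarrow> wact k t \<in> A n"
  by (cases t) (simp add: A_def wact_def algebra_simps power2_eq_square)

lemma xact_xact [simp]: "xact (xact t) = t"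
  by (cases t) (simp add: xact_def)

lemma wact_wact: "wact j (wact k t) = wact (j + k) t"
  by (cases t) (simp add: wact_def algebra_simps power2_eq_square)

lemma wact_zero [simp]: "wact 0 t = t"
  by (cases t) (simp add: wact_def)

lemma wact_wact_uminus [simp]: "wact k (wact (- k) t) = t"
  by (simp add: wact_wact)

datatype last_step = Start | Flip | Shift int

inductive_set reduced_walk :: "int \<Rightarrow> triple \<Rightarrow> (triple \<times> last_step) set"
  for l :: int and t0 :: triple where
  start: "(t0, Start) \<in> reduced_walk l t0"
| flip: "(t, q) \<in> reduced_walk l t0 \<Longrightarrow> q \<noteq> Flip \<Longrightarrow> (xact t, Flip) \<in> reduced_walk l t0"
| shift: "(t, q) \<in> reduced_walk l t0 \<Longrightarrow> k \<in> {l, - l} \<Longrightarrow> q \<noteq> Shift (- k)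
    \<Longrightarrow> (wact k t, Shift k) \<in> reduced_walk l t0"

lemma reduced_walk_in_A:
  assumes "(t, q) \<in> reduced_walk l t0" and "t0 \<in> A n"
  shows "t \<in> A n"
  using assms by induction (auto intro: xact_in_A wact_in_A)

lemma reduced_walk_xact:
  assumes "(t, q) \<in> reduced_walk l t0"
  shows "\<exists>q'. (xact t, q') \<in> reduced_walk l t0"
proof (cases "q = Flip")
  case True
  with assms show ?thesis
    by (cases rule: reduced_walk.cases) auto
qed (use assms reduced_walk.flip in blast)

lemma reduced_walk_wact:
  assumes "(t, q) \<in> reduced_walk l t0" and "k \<in> {l, - l}"
  shows "\<exists>q'. (wact k t, q') \<in> reduced_walk l t0"
proof (cases "q = Shift (- k)")
  case True
  with assms(1) show ?thesis
    by (cases rule: reduced_walk.cases) auto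
qed (use assms reduced_walk.shift in blast)

lemma Horbit_reduced_walk:
  assumes "t \<in> Horbit l t0"
  shows "\<exists>q. (t, q) \<in> reduced_walk l t0"
  using assms
proof induction
  case base
  show ?case using reduced_walk.start by blast
next
  case (x_step t)
  then show ?case using reduced_walk_xact by blast
next
  case (w_step t)
  then show ?case using reduced_walk_wact[of t _ l t0 l] by blast
next
  case (winv_step t)
  then show ?case using reduced_walk_wact[of t _ l t0 "- l"] by (auto simp: winvact_def)
qed

lemma alpha_threshold:
  fixes n s :: int
  assumes "\<bar>n\<bar> + 4 \<le> s"
  shows "\<bar>n\<bar> < s^2 - s - n" and "3 * s \<le> s^2 - s - n"
proof -
  have "(\<bar>n\<bar> + 4) * s \<le> s * s" using assms by (intro mult_right_mono) auto
  moreover have "\<bar>n\<bar> * 2 \<le> \<bar>n\<bar> * s" using assms by (intro mult_left_mono) auto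
  ultimately have "2 * \<bar>n\<bar> + 4 * s \<le> s^2" by (simp add: power2_eq_square algebra_simps)
  then show "\<bar>n\<bar> < s^2 - s - n" and "3 * s \<le> s^2 - s - n" using assms by linarith+
qed

lemma alpha_in_A: "alpha n s \<in> A n"
  by (simp add: A_def alpha_def power2_eq_square algebra_simps)

text \<open>The flip \<open>x \<alpha>\<^sub>s\<close> of the starting point is the only triple ending in \<open>x\<close> with \<open>|c| < |a|\<close>.\<close>

fun walk_inv :: "int \<Rightarrow> int \<Rightarrow> last_step \<Rightarrow> triple \<Rightarrow> bool" where
  "walk_inv n s Start t \<longleftrightarrow> t = alpha n s"
| "walk_inv n s Flip (a, b, c) \<longleftrightarrow>
     s^2 - s - n \<le> \<bar>a\<bar> \<and> (\<bar>a\<bar> < \<bar>c\<bar> \<or> (a, b, c) = xact (alpha n s))"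
| "walk_inv n s (Shift k) (a, b, c) \<longleftrightarrow>
     s^2 - s - n \<le> \<bar>a\<bar> \<and> \<bar>c\<bar> < \<bar>a\<bar> \<and> 0 < k * a * c"

lemma walk_inv_abs_ge: "walk_inv n s q (a, b, c) \<Longrightarrow> s^2 - s - n \<le> \<bar>a\<bar>"
  by (cases q) (auto simp: alpha_def)

lemma walk_inv_xact:
  fixes n s :: int
  assumes "walk_inv n s q t" and "q \<noteq> Flip" and "t \<in> A n" and "\<bar>n\<bar> + 4 \<le> s"
  shows "walk_inv n s Flip (xact t)"
proof (cases q)
  case Start
  then show ?thesis using assms(1) by (simp add: alpha_def xact_def)
next
  case (Shift k)
  obtain a b c where t: "t = (a, b, c)" by (cases t)
  have "s^2 - s - n \<le> \<bar>a\<bar>" and "\<bar>c\<bar> < \<bar>a\<bar>"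
    using assms(1) by (simp_all add: Shift t)
  moreover have "b * c = a^2 - n" using assms(3) by (simp add: A_def t)
  ultimately have "\<bar>a\<bar> < \<bar>b\<bar>"
    using alpha_threshold(1)[OF assms(4)] by (intro factor_abs_gt[of b c a n]) auto
  then show ?thesis using \<open>s^2 - s - n \<le> \<bar>a\<bar>\<close> by (simp add: t xact_def)
qed (use assms(2) in simp)

lemma walk_inv_wact:
  fixes n s k :: int
  assumes "walk_inv n s q t" and "q \<in> {Start, Flip, Shift k}"
    and "3 \<le> \<bar>k\<bar>" and "\<bar>n\<bar> + 4 \<le> s"
  shows "walk_inv n s (Shift k) (wact k t)"
proof -
  obtain a b c where t: "t = (a, b, c)" by (cases t)
  define N where "N = s^2 - s - n"
  have N: "\<bar>n\<bar> < N" "3 * s \<le> N" using alpha_threshold[OF assms(4)] by (simp_all add: N_def)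
  have "4 \<le> s" and "0 < N - s + 1" using N assms(4) by linarith+
  have alpha: "alpha n s = (N, N - s + 1, N + s)"
    by (simp add: alpha_def N_def power2_eq_square algebra_simps)
  consider (small) "\<bar>a\<bar> < \<bar>c\<bar>" "N \<le> \<bar>a\<bar>"
    | (same_sign) "0 < k * a * c" "\<bar>c\<bar> < \<bar>a\<bar>" "N \<le> \<bar>a\<bar>"
    | (flipped_alpha) "t = xact (alpha n s)" "0 < k"
  proof -
    have "t = alpha n s \<or> (N \<le> \<bar>a\<bar> \<and> (\<bar>a\<bar> < \<bar>c\<bar> \<or> t = xact (alpha n s)))
        \<or> (0 < k * a * c \<and> \<bar>c\<bar> < \<bar>a\<bar> \<and> N \<le> \<bar>a\<bar>)"
      using assms(1,2) by (auto simp: t N_def)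
    moreover have "0 < k * a * c" if "t = xact (alpha n s)" "k < 0"
      using that N \<open>0 < N - s + 1\<close> by (simp add: t alpha xact_def mult_less_0_iff)
    ultimately show ?thesis
      using that N \<open>4 \<le> s\<close> assms(3) by (cases "k < 0") (auto simp: t alpha xact_def)
  qed
  then have "N \<le> \<bar>a + k * c\<bar> \<and> \<bar>c\<bar> < \<bar>a + k * c\<bar> \<and> 0 < k * (a + k * c) * c"
  proof cases
    case small
    then show ?thesis using shift_of_abs_lt[OF small(1) assms(3)] by linarith
  next
    case same_sign
    then show ?thesis using shift_of_same_sign[OF same_sign(1)] by linarith
  next
    case flipped_alpha
    then have ac: "a = - N" "c = N - s + 1" by (simp_all add: t alpha xact_def)
    have "3 * c \<le> k * c" using flipped_alpha(2) assms(3) N ac by (intro mult_right_mono) auto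
    then have "N + 3 \<le> a + k * c" using ac N by linarith
    then show ?thesis using ac \<open>0 < N - s + 1\<close> \<open>4 \<le> s\<close> flipped_alpha(2) by simp
  qed
  then show ?thesis by (simp add: t wact_def N_def)
qed

lemma reduced_walk_Shift:
  "(t, Shift j) \<in> reduced_walk l t0 \<Longrightarrow> j \<in> {l, - l}"
  by (cases rule: reduced_walk.cases) auto

lemma reduced_walk_alpha_inv:
  assumes "(t, q) \<in> reduced_walk l (alpha n s)" and "3 \<le> l" and "\<bar>n\<bar> + 4 \<le> s"
  shows "walk_inv n s q t"
  using assms(1)
proof induction
  case start
  then show ?case by simp
next
  case (flip t q)
  then show ?case
    using reduced_walk_in_A[OF flip(1) alpha_in_A] walk_inv_xact assms(3) by blast
next
  case (shift t q k)
  have "q \<in> {Start, Flip, Shift k}"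
  proof (cases q)
    case (Shift j)
    then have "j \<in> {l, - l}" using shift.hyps(1) reduced_walk_Shift by blast
    then show ?thesis using Shift shift.hyps assms(2) by auto
  qed simp_all
  moreover have "3 \<le> \<bar>k\<bar>" using shift.hyps assms(2) by auto
  ultimately show ?case using walk_inv_wact shift.IH assms(3) by blast
qed

lemma Horbit_alpha_abs_ge:
  assumes "(a, b, c) \<in> Horbit l (alpha n s)" and "3 \<le> l" and "\<bar>n\<bar> + 4 \<le> s"
  shows "s^2 - s - n \<le> \<bar>a\<bar>"
proof -
  obtain q where "((a, b, c), q) \<in> reduced_walk l (alpha n s)"
    using Horbit_reduced_walk[OF assms(1)] by blast
  then show ?thesis using reduced_walk_alpha_inv assms(2,3) walk_inv_abs_ge by blast
qed

theorem mainTheorem5: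
  fixes n l :: int
  assumes "squarefree n" and "n \<noteq> 1" and "l \<ge> 3"
  shows "\<exists>s0::int.
     (\<forall>s t. s > t \<and> t \<ge> s0 \<and> (t - 1)^2 > n \<and> (s - 1)^2 > n \<longrightarrow>
        Horbit l (alpha n s) \<noteq> Horbit l (alpha n t)) \<and>
     (\<forall>s. s \<ge> s0 \<and> (s - 1)^2 > n \<longrightarrow>
        (\<forall>a' b' c'. (a', b', c') \<in> Horbit l (alpha n s) \<longrightarrow> \<bar>a'\<bar> \<ge> s^2 - s - n))"
proof (intro exI[of _ "\<bar>n\<bar> + 4"] conjI allI impI)
  fix s a' b' c'
  assume "\<bar>n\<bar> + 4 \<le> s \<and> n < (s - 1)^2" and "(a', b', c') \<in> Horbit l (alpha n s)"
  then show "s^2 - s - n \<le> \<bar>a'\<bar>" using Horbit_alpha_abs_ge assms(3) by blast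
next
  fix s t
  assume st: "t < s \<and> \<bar>n\<bar> + 4 \<le> t \<and> n < (t - 1)^2 \<and> n < (s - 1)^2"
  show "Horbit l (alpha n s) \<noteq> Horbit l (alpha n t)"
  proof
    assume "Horbit l (alpha n s) = Horbit l (alpha n t)"
    then have "alpha n t \<in> Horbit l (alpha n s)" using Horbit.base by simp
    then have "s^2 - s - n \<le> \<bar>t^2 - t - n\<bar>"
      using Horbit_alpha_abs_ge assms(3) st by (simp add: alpha_def)
    moreover have "\<bar>n\<bar> < t^2 - t - n" using alpha_threshold(1) st by blast
    moreover have "0 < (s - t) * (s + t - 1)" using st by (intro mult_pos_pos) auto
    ultimately show False by (simp add: algebra_simps power2_eq_square)
  qed
qed

end
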